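(* Let $\mathbb{F}$ be a finite field, $n$ a positive integer coprime with $|\mathbb{F}|$, and $\alpha\in\mathbb{F}$ with $\mathrm{ord}(\alpha)=n$. Let $A:=\mathbb{F}[x]/\langle x^n-1\rangle$. Let $\delta\in\mathbb{N}_0$ and $G:=\sum_{\nu=0}^{\delta}z^\nu\begin{pmatrix}1&\alpha^\nu&\alpha^{2\nu}&\ldots&\alpha^{(n-1)\nu}\end{pmatrix}\in\mathbb{F}[z]^{1\times n}$. Then the $\mathbb{F}$-algebra homomorphism $\sigma:A\to A$ defined by $\sigma(x)=\alpha x$ is an $\mathbb{F}$-automorphism of $A$, and the submodule $\mathcal{C}=\mathrm{im}\,G=\{uG\mid u\in\mathbb{F}[z]\}\subseteq\mathbb{F}[z]^n$ is $\sigma$-cyclic. In particular, if $\delta<n$, then $\mathcal{C}$ is a ($\sigma$-)cyclic MDS convolutional code with parameters $(n,1,\delta)$.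
   Context: $\mathrm{ord}(\alpha)$ is the multiplicative order of $\alpha$. For $\sigma\in\mathrm{Aut}_{\mathbb{F}}(A)$, the skew polynomial ring $A[z;\sigma]$ is the set of polynomials $\sum_\nu z^\nu a_\nu$ ($a_\nu\in A$) with usual addition and multiplication determined by associativity, distributivity, the multiplication of $A$, and the rule $az=z\sigma(a)$ for $a\in A$. Let $\mathfrak{p}:\mathbb{F}^n\to A$, $(v_0,\ldots,v_{n-1})\mapsto\sum_{i=0}^{n-1}v_ix^i$, extended coefficientwise to $\mathfrak{p}:\mathbb{F}[z]^n\to A[z;\sigma]$, $\sum_\nu z^\nu v_\nu\mapsto\sum_\nu z^\nu\mathfrak{p}(v_\nu)$. A submodule $\mathcal{C}\subseteq\mathbb{F}[z]^n$ is $\sigma$-cyclic if $\mathfrak{p}(\mathcal{C})$ is a left ideal of $A[z;\sigma]$. A convolutional code with parameters $(n,1,\delta)$ is $\mathrm{im}\,G$ for a right invertible $G\in\mathbb{F}[z]^{1\times n}$ whose entries have maximum degree $\delta$; it is MDS if its free distance $\min\{\mathrm{wt}(v)\mid 0\ne v\in\mathcal{C}\}$ equals $n(\delta+1)$, where $\mathrm{wt}(\sum_j v_jz^j)=\sum_j(\text{Hamming weight of }v_j)$. *)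

theory Defs
  imports "HOL-Computational_Algebra.Polynomial"
begin

definition mult_ord :: "'a::field \<Rightarrow> nat" where
  "mult_ord a = (if \<exists>k>0. a ^ k = 1 then (LEAST k. 0 < k \<and> a ^ k = 1) else 0)"

section \<open>The algebra A = F[x]/<x^n - 1>, represented by canonical residues of degree < n\<close>

definition xn1 :: "nat \<Rightarrow> 'a::field poly" where
  "xn1 n = monom 1 n - 1"

definition A_carr :: "nat \<Rightarrow> 'a::field poly set" where
  "A_carr n = {p. degree p < n}"

definition A_mult :: "nat \<Rightarrow> 'a::field poly \<Rightarrow> 'a poly \<Rightarrow> 'a poly" where
  "A_mult n p q = (p * q) mod xn1 n"

definition A_one :: "nat \<Rightarrow> 'a::field poly" where
  "A_one n = 1 mod xn1 n"

definition A_x :: "nat \<Rightarrow> 'a::field poly" where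
  "A_x n = [:0, 1:] mod xn1 n"

definition sigma :: "'a::field \<Rightarrow> nat \<Rightarrow> 'a poly \<Rightarrow> 'a poly" where
  "sigma \<alpha> n p = (pcompose p [:0, \<alpha>:]) mod xn1 n"

definition A_alg_automorphism :: "nat \<Rightarrow> ('a::field poly \<Rightarrow> 'a poly) \<Rightarrow> bool" where
  "A_alg_automorphism n s \<longleftrightarrow>
     bij_betw s (A_carr n) (A_carr n) \<and>
     (\<forall>p\<in>A_carr n. \<forall>q\<in>A_carr n. s (p + q) = s p + s q) \<and>
     (\<forall>p\<in>A_carr n. \<forall>q\<in>A_carr n. s (A_mult n p q) = A_mult n (s p) (s q)) \<and>
     (\<forall>c. \<forall>p\<in>A_carr n. s (smult c p) = smult c (s p)) \<and>
     s (A_one n) = A_one n"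

section \<open>Skew polynomial ring A[z;s], elements sum_nu z^nu a_nu as 'a poly poly\<close>

definition skew_carr :: "nat \<Rightarrow> 'a::field poly poly set" where
  "skew_carr n = {f. \<forall>i. coeff f i \<in> A_carr n}"

text \<open>(z^i a)(z^j b) = z^(i+j) s^j(a) b, using a z = z s(a)\<close>
definition skew_mult :: "nat \<Rightarrow> ('a::field poly \<Rightarrow> 'a poly) \<Rightarrow> 'a poly poly \<Rightarrow> 'a poly poly \<Rightarrow> 'a poly poly" where
  "skew_mult n s f g =
     (\<Sum>i\<le>degree f. \<Sum>j\<le>degree g. monom (A_mult n ((s ^^ j) (coeff f i)) (coeff g j)) (i + j))"

definition left_ideal :: "nat \<Rightarrow> ('a::field poly \<Rightarrow> 'a poly) \<Rightarrow> 'a poly poly set \<Rightarrow> bool" where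
  "left_ideal n s I \<longleftrightarrow>
     I \<subseteq> skew_carr n \<and> 0 \<in> I \<and>
     (\<forall>f\<in>I. \<forall>g\<in>I. f + g \<in> I) \<and> (\<forall>f\<in>I. - f \<in> I) \<and>
     (\<forall>r\<in>skew_carr n. \<forall>f\<in>I. skew_mult n s r f \<in> I)"

section \<open>F[z]^n as functions nat => 'a poly (components i < n, zero beyond) and the map p\<close>

definition pmap :: "nat \<Rightarrow> (nat \<Rightarrow> 'a::field poly) \<Rightarrow> 'a poly poly" where
  "pmap n c = (\<Sum>i<n. map_poly (\<lambda>a. monom a i) (c i))"

definition sigma_cyclic :: "nat \<Rightarrow> ('a::field poly \<Rightarrow> 'a poly) \<Rightarrow> (nat \<Rightarrow> 'a poly) set \<Rightarrow> bool" where
  "sigma_cyclic n s C \<longleftrightarrow> left_ideal n s (pmap n ` C)"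

definition image_row :: "(nat \<Rightarrow> 'a::field poly) \<Rightarrow> (nat \<Rightarrow> 'a poly) set" where
  "image_row g = {(\<lambda>i. u * g i) | u. True}"

definition right_invertible_row :: "nat \<Rightarrow> (nat \<Rightarrow> 'a::field poly) \<Rightarrow> bool" where
  "right_invertible_row n g \<longleftrightarrow> (\<exists>h. (\<Sum>i<n. g i * h i) = 1)"

definition conv_code_n1 :: "nat \<Rightarrow> nat \<Rightarrow> (nat \<Rightarrow> 'a::field poly) set \<Rightarrow> bool" where
  "conv_code_n1 n \<delta> C \<longleftrightarrow>
     (\<exists>g. (\<forall>i\<ge>n. g i = 0) \<and> right_invertible_row n g \<and>
          Max ((\<lambda>i. degree (g i)) ` {..<n}) = \<delta> \<and> C = image_row g)"

definition wt :: "nat \<Rightarrow> (nat \<Rightarrow> 'a::zero poly) \<Rightarrow> nat" where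
  "wt n v = (\<Sum>i<n. card {j. coeff (v i) j \<noteq> 0})"

definition free_distance :: "nat \<Rightarrow> (nat \<Rightarrow> 'a::zero poly) set \<Rightarrow> nat" where
  "free_distance n C = (LEAST w. \<exists>v\<in>C. v \<noteq> (\<lambda>_. 0) \<and> w = wt n v)"

definition is_MDS :: "nat \<Rightarrow> nat \<Rightarrow> (nat \<Rightarrow> 'a::zero poly) set \<Rightarrow> bool" where
  "is_MDS n \<delta> C \<longleftrightarrow> free_distance n C = n * (\<delta> + 1)"

definition Grow :: "'a::field \<Rightarrow> nat \<Rightarrow> nat \<Rightarrow> nat \<Rightarrow> 'a poly" where
  "Grow \<alpha> n \<delta> i = (if i < n then (\<Sum>\<nu>\<le>\<delta>. monom (\<alpha> ^ (i * \<nu>)) \<nu>) else 0)"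

end

theory Submission
  imports Defs
begin

(* sigma is the substitution x -> alpha x; it preserves x^n - 1 because alpha^n = 1
   and is inverted by x -> alpha^-1 x. Write G = sum_nu z^nu g_nu. In A the element
   p(g_nu) = sum_l alpha^(l nu) x^l is a common eigenvector of all multiplications:
   a p(g_nu) = a(alpha^-nu) p(g_nu). Hence sigma^(k+nu)(r) p(g_nu) = r(alpha^k) p(g_nu), so
   left multiplication by z^i r maps p(z^k G) to p(r(alpha^k) z^(i+k) G), and p(im G) is a
   left ideal. The constant column (1/n, ..., 1/n) is a right inverse of G, because sums of
   all n-th powers of a nontrivial n-th root of unity vanish. For the distance bound, the
   coefficient of z^j in the i-th entry of uG is a polynomial w_j, whose coefficients are a
   window of those of u, evaluated at alpha^i; counting roots among the n distinct points
   alpha^i bounds the weight of each z^j-coefficient from below, and the coefficients next to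
   the lowest and the highest term of u already carry weight n (delta + 1). *)

lemma nonzero_if_power_eq_1: "x ^ n = 1 \<Longrightarrow> 0 < n \<Longrightarrow> x \<noteq> (0 :: 'a::semiring_1)"
  by (auto simp: power_0_left)

lemma degree_pcompose_linear_le:
  "degree (pcompose p [:0, c :: 'a :: comm_semiring_1:]) \<le> degree p"
  by (rule degree_le) (auto simp: coeff_pcompose_linear coeff_eq_0)

lemma pcompose_linear_linear:
  "pcompose (pcompose p [:0, a:]) [:0, b:] = pcompose p [:0, a * b :: 'a :: comm_semiring_1:]"
  by (simp add: poly_eq_iff coeff_pcompose_linear power_mult_distrib mult_ac)

lemma coeff_xn1:
  "coeff (xn1 n :: 'a::field poly) k = (if k = n then 1 else 0) - (if k = 0 then 1 else 0)"
  by (simp add: xn1_def)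

lemma degree_xn1: "0 < n \<Longrightarrow> degree (xn1 n :: 'a::field poly) = n"
  by (intro antisym degree_le le_degree) (auto simp: coeff_xn1)

lemma mod_xn1_eq_self: "degree p < n \<Longrightarrow> p mod xn1 n = (p :: 'a::field poly)"
  by (rule mod_poly_less) (simp add: degree_xn1)

lemma pcompose_xn1: "\<alpha> ^ n = 1 \<Longrightarrow> pcompose (xn1 n) [:0, \<alpha>:] = (xn1 n :: 'a::field poly)"
  by (simp add: poly_eq_iff coeff_pcompose_linear coeff_xn1)

lemma A_one_eq_1: "0 < n \<Longrightarrow> A_one n = (1 :: 'a::field poly)"
  unfolding A_one_def by (simp add: mod_xn1_eq_self)

lemma A_mult_smult_right: "A_mult n a (smult c b) = smult c (A_mult n a b)"
  unfolding A_mult_def by (simp add: mod_smult_left)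

subsection \<open>The automorphism \<open>\<sigma>\<close>\<close>

lemma sigma_eq_pcompose: "degree p < n \<Longrightarrow> sigma c n p = pcompose p [:0, c:]"
  unfolding sigma_def using degree_pcompose_linear_le[of p c]
  by (intro mod_xn1_eq_self) simp

lemma sigma_in_A_carr: "p \<in> A_carr n \<Longrightarrow> sigma c n p \<in> A_carr n"
  using sigma_eq_pcompose[of p n c] degree_pcompose_linear_le[of p c]
  by (simp add: A_carr_def)

lemma sigma_sigma: "degree p < n \<Longrightarrow> sigma a n (sigma b n p) = sigma (b * a) n p"
  using sigma_in_A_carr[of p n b]
  by (simp add: A_carr_def sigma_eq_pcompose pcompose_linear_linear)

lemma funpow_sigma: "degree p < n \<Longrightarrow> (sigma c n ^^ j) p = pcompose p [:0, c ^ j:]"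
proof (induction j)
  case (Suc j)
  then have "degree (pcompose p [:0, c ^ j:]) < n"
    using degree_pcompose_linear_le[of p "c ^ j"] by linarith
  with Suc show ?case
    by (simp add: sigma_eq_pcompose pcompose_linear_linear mult.commute)
qed simp

lemma sigma_mod_xn1:
  assumes "\<alpha> ^ n = 1"
  shows "sigma \<alpha> n (p mod xn1 n) = sigma \<alpha> n (p :: 'a::field poly)"
proof -
  let ?m = "xn1 n :: 'a poly"
  have "pcompose p [:0,\<alpha>:] = pcompose (p div ?m) [:0,\<alpha>:] * ?m + pcompose (p mod ?m) [:0,\<alpha>:]"
    by (metis div_mult_mod_eq pcompose_add pcompose_mult pcompose_xn1[OF assms])
  then show ?thesis
    unfolding sigma_def by (metis mod_mult_self3)
qed

lemma sigma_add: "sigma \<alpha> n (p + q) = sigma \<alpha> n p + sigma \<alpha> n q"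
  by (simp add: sigma_def pcompose_add poly_mod_add_left)

lemma sigma_smult: "sigma \<alpha> n (smult c p) = smult c (sigma \<alpha> n p)"
  by (simp add: sigma_def pcompose_smult mod_smult_left)

lemma sigma_A_mult:
  assumes "\<alpha> ^ n = 1"
  shows "sigma \<alpha> n (A_mult n p q) = A_mult n (sigma \<alpha> n p) (sigma \<alpha> n q)"
proof -
  have "sigma \<alpha> n (A_mult n p q) = sigma \<alpha> n (p * q)"
    unfolding A_mult_def by (rule sigma_mod_xn1[OF assms])
  also have "\<dots> = A_mult n (sigma \<alpha> n p) (sigma \<alpha> n q)"
    unfolding A_mult_def sigma_def by (simp add: pcompose_mult mod_mult_eq)
  finally show ?thesis .
qed

lemma bij_betw_sigma:
  assumes "\<alpha> ^ n = 1" "0 < n"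
  shows "bij_betw (sigma \<alpha> n) (A_carr n) (A_carr n)"
proof (rule bij_betw_byWitness[where f' = "sigma (inverse \<alpha>) n"])
  have "\<alpha> \<noteq> 0"
    using assms by (rule nonzero_if_power_eq_1)
  then show "\<forall>p\<in>A_carr n. sigma (inverse \<alpha>) n (sigma \<alpha> n p) = p"
    and "\<forall>p\<in>A_carr n. sigma \<alpha> n (sigma (inverse \<alpha>) n p) = p"
    by (auto simp: A_carr_def sigma_sigma, auto simp: sigma_eq_pcompose)
qed (auto intro: sigma_in_A_carr)

lemma A_alg_automorphism_sigma:
  assumes "\<alpha> ^ n = 1" "0 < n"
  shows "A_alg_automorphism n (sigma \<alpha> n)"
  unfolding A_alg_automorphism_def
  using bij_betw_sigma[OF assms] sigma_A_mult[OF assms(1)] assms(2)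
  by (simp add: sigma_add sigma_smult A_one_eq_1 sigma_eq_pcompose pcompose_1)

lemma sigma_A_x:
  assumes "\<alpha> ^ n = 1"
  shows "sigma \<alpha> n (A_x n) = smult \<alpha> (A_x n)"
proof -
  have "sigma \<alpha> n (A_x n) = sigma \<alpha> n [:0,1:]"
    unfolding A_x_def by (rule sigma_mod_xn1[OF assms])
  also have "\<dots> = smult \<alpha> (A_x n)"
    by (simp add: sigma_def pcompose_pCons A_x_def flip: mod_smult_left)
  finally show ?thesis .
qed

lemma
  assumes "mult_ord \<alpha> = n" "0 < n"
  shows power_mult_ord: "\<alpha> ^ n = 1"
    and power_ne_1_below_mult_ord: "\<And>k. 0 < k \<Longrightarrow> k < n \<Longrightarrow> \<alpha> ^ k \<noteq> 1"
proof -
  have ex: "\<exists>k>0. \<alpha> ^ k = 1"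
    using assms unfolding mult_ord_def by (metis less_irrefl)
  then have n: "n = (LEAST k. 0 < k \<and> \<alpha> ^ k = 1)"
    using assms unfolding mult_ord_def by simp
  show "\<alpha> ^ n = 1"
    unfolding n using ex by (metis (mono_tags, lifting) LeastI)
  show "\<And>k. 0 < k \<Longrightarrow> k < n \<Longrightarrow> \<alpha> ^ k \<noteq> 1"
    unfolding n using not_less_Least by blast
qed

lemma inj_on_power_mult_ord:
  fixes \<alpha> :: "'a::field"
  assumes "mult_ord \<alpha> = n" "0 < n"
  shows "inj_on (\<lambda>i. \<alpha> ^ i) {..<n}"
proof (rule linorder_inj_onI')
  fix i j assume ij: "i \<in> {..<n}" "j \<in> {..<n}" "i < j"
  have "\<alpha> \<noteq> 0"
    using power_mult_ord[OF assms] assms(2) by (rule nonzero_if_power_eq_1)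
  moreover have "\<alpha> ^ (j - i) \<noteq> 1"
    using ij by (intro power_ne_1_below_mult_ord[OF assms]) auto
  moreover have "\<alpha> ^ j = \<alpha> ^ i * \<alpha> ^ (j - i)"
    using ij by (simp flip: power_add)
  ultimately show "\<alpha> ^ i \<noteq> \<alpha> ^ j"
    by auto
qed

text \<open>The characteristic \<open>p\<close> never divides a multiplicative order: if \<open>n = p k\<close> then
  \<open>(\<alpha>\<^sup>k - 1)\<^sup>p = \<alpha>\<^sup>n - 1 = 0\<close>.\<close>
lemma of_nat_mult_ord_ne_0:
  fixes \<alpha> :: "'a::field"
  assumes "mult_ord \<alpha> = n" "0 < n"
  shows "(of_nat n :: 'a) \<noteq> 0"
proof
  assume "(of_nat n :: 'a) = 0"
  then have "CHAR('a) dvd n"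
    by (simp add: of_nat_eq_0_iff_char_dvd)
  then obtain k where k: "n = CHAR('a) * k"
    by blast
  then have "CHAR('a) > 0" "0 < k"
    using assms(2) by auto
  then have p: "prime CHAR('a)"
    using prime_CHAR_semidom by blast
  then have "k < n"
    using k \<open>0 < k\<close> prime_gt_1_nat by fastforce
  have "(\<alpha> ^ k + (- 1)) ^ CHAR('a) = (\<alpha> ^ k) ^ CHAR('a) + (- 1) ^ CHAR('a)"
    by (rule freshmans_dream) (use p in auto)
  also have "(\<alpha> ^ k) ^ CHAR('a) = 1"
    using power_mult_ord[OF assms] k by (simp add: power_mult[symmetric] mult.commute)
  also have "(- 1 :: 'a) ^ CHAR('a) = - 1"
    using minus_power_prime_CHAR[OF refl p, of 1] by simp
  finally have "\<alpha> ^ k = 1"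
    by simp
  then show False
    using power_ne_1_below_mult_ord[OF assms \<open>0 < k\<close> \<open>k < n\<close>] by blast
qed

text \<open>The image under \<open>\<pp>\<close> of the coefficient of \<open>z\<^sup>\<nu>\<close> in \<open>G\<close>.\<close>
definition vander_poly :: "'a::field \<Rightarrow> nat \<Rightarrow> nat \<Rightarrow> 'a poly" where
  "vander_poly \<alpha> n \<nu> = (\<Sum>l<n. monom (\<alpha> ^ (l * \<nu>)) l)"

lemma coeff_sum_monom_lessThan: "coeff (\<Sum>l<n. monom (c l) l) k = (if k < n then c k else 0)"
  by (simp add: coeff_sum)

lemma degree_sum_monom_lessThan:
  assumes "0 < n"
  shows "degree (\<Sum>l<n. monom (c l) l) < n"
proof -
  have "degree (\<Sum>l<n. monom (c l) l) \<le> n - 1"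
    by (rule degree_le) (auto simp: coeff_sum_monom_lessThan)
  with assms show ?thesis
    by linarith
qed

lemma coeff_vander_poly: "coeff (vander_poly \<alpha> n \<nu>) k = (if k < n then \<alpha> ^ (k * \<nu>) else 0)"
  unfolding vander_poly_def by (rule coeff_sum_monom_lessThan)

lemma degree_vander_poly: "0 < n \<Longrightarrow> degree (vander_poly \<alpha> n \<nu>) < n"
  unfolding vander_poly_def by (rule degree_sum_monom_lessThan)

lemma x_mult_vander_poly:
  assumes "\<alpha> ^ n = 1" "0 < n"
  shows "[:0, 1:] * vander_poly \<alpha> n \<nu> = smult (inverse (\<alpha> ^ \<nu>)) (vander_poly \<alpha> n \<nu> + xn1 n)"
proof (rule poly_eqI)
  fix k
  have a\<nu>: "\<alpha> ^ \<nu> \<noteq> 0"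
    using nonzero_if_power_eq_1[OF assms] by simp
  have n\<nu>: "\<alpha> ^ (n * \<nu>) = 1"
    using assms(1) by (simp add: power_mult)
  have step: "\<alpha> ^ (Suc i * \<nu>) = \<alpha> ^ (i * \<nu>) * \<alpha> ^ \<nu>" for i
    by (simp add: power_add)
  show "coeff ([:0, 1:] * vander_poly \<alpha> n \<nu>) k =
      coeff (smult (inverse (\<alpha> ^ \<nu>)) (vander_poly \<alpha> n \<nu> + xn1 n)) k"
  proof (cases k)
    case (Suc j)
    consider "Suc j < n" | "Suc j = n" | "n < Suc j"
      by linarith
    then show ?thesis
    proof cases
      case 1
      with Suc a\<nu> show ?thesis
        by (simp add: coeff_vander_poly coeff_xn1 step field_simps power_add)
    next
      case 2
      then have "\<alpha> ^ (j * \<nu>) = inverse (\<alpha> ^ \<nu>)"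
        using n\<nu> step[of j] a\<nu> by (simp add: field_simps)
      with Suc 2[symmetric] show ?thesis
        by (simp add: coeff_vander_poly coeff_xn1)
    qed (use Suc in \<open>simp add: coeff_vander_poly coeff_xn1\<close>)
  qed (use assms(2) in \<open>simp add: coeff_vander_poly coeff_xn1\<close>)
qed

lemma mult_vander_poly_mod_xn1:
  assumes "\<alpha> ^ n = 1" "0 < n"
  shows "(p * vander_poly \<alpha> n \<nu>) mod xn1 n = smult (poly p (inverse (\<alpha> ^ \<nu>))) (vander_poly \<alpha> n \<nu>)"
proof (induction p)
  case (pCons c p)
  let ?V = "vander_poly \<alpha> n \<nu>" and ?m = "xn1 n :: 'a poly"
  have V: "?V mod ?m = ?V"
    using degree_vander_poly[OF assms(2)] by (rule mod_xn1_eq_self)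
  have "(pCons c p * ?V) mod ?m = smult c ?V + ([:0,1:] * (p * ?V)) mod ?m"
    by (simp add: poly_mod_add_left mod_smult_left V)
  also have "\<dots> = smult c ?V + ([:0,1:] * ((p * ?V) mod ?m)) mod ?m"
    by (simp only: mod_mult_right_eq)
  also have "\<dots> = smult c ?V + smult (poly p (inverse (\<alpha> ^ \<nu>))) (([:0,1:] * ?V) mod ?m)"
    by (simp only: pCons.IH mult_smult_right mod_smult_left)
  also have "([:0,1:] * ?V) mod ?m = smult (inverse (\<alpha> ^ \<nu>)) ?V"
    unfolding x_mult_vander_poly[OF assms] mod_smult_left poly_mod_add_left V by simp
  also have "smult c ?V + smult (poly p (inverse (\<alpha> ^ \<nu>))) (smult (inverse (\<alpha> ^ \<nu>)) ?V)
      = smult (poly (pCons c p) (inverse (\<alpha> ^ \<nu>))) ?V"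
    by (simp add: smult_add_left mult.commute)
  finally show ?case .
qed simp

lemma A_mult_funpow_sigma_vander_poly:
  assumes "\<alpha> ^ n = 1" "0 < n" "degree a < n" "\<nu> \<le> j"
  shows "A_mult n ((sigma \<alpha> n ^^ j) a) (vander_poly \<alpha> n \<nu>) =
    smult (poly a (\<alpha> ^ (j - \<nu>))) (vander_poly \<alpha> n \<nu>)"
proof -
  have "\<alpha> \<noteq> 0"
    using assms(1,2) by (rule nonzero_if_power_eq_1)
  then have "inverse (\<alpha> ^ \<nu>) * \<alpha> ^ j = \<alpha> ^ (j - \<nu>)"
    using assms(4) by (simp add: power_diff field_simps)
  then show ?thesis
    unfolding A_mult_def funpow_sigma[OF assms(3)] mult_vander_poly_mod_xn1[OF assms(1,2)]
    by (simp add: poly_pcompose)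
qed

subsection \<open>The image of the code under \<open>\<pp>\<close>\<close>

lemma coeff_pmap: "coeff (pmap n c) k = (\<Sum>i<n. monom (coeff (c i) k) i)"
  unfolding pmap_def by (simp add: coeff_sum coeff_map_poly)

lemma pmap_add: "pmap n (\<lambda>i. c i + d i) = pmap n c + pmap n d"
  by (simp add: poly_eq_iff coeff_pmap add_monom[symmetric] sum.distrib)

lemma degree_coeff_pmap: "0 < n \<Longrightarrow> degree (coeff (pmap n c) k) < n"
  unfolding coeff_pmap by (rule degree_sum_monom_lessThan)

definition pmap_uG :: "'a::field \<Rightarrow> nat \<Rightarrow> nat \<Rightarrow> 'a poly \<Rightarrow> 'a poly poly" where
  "pmap_uG \<alpha> n \<delta> u = pmap n (\<lambda>i. u * Grow \<alpha> n \<delta> i)"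

lemma pmap_uG_add: "pmap_uG \<alpha> n \<delta> (u + v) = pmap_uG \<alpha> n \<delta> u + pmap_uG \<alpha> n \<delta> v"
  unfolding pmap_uG_def by (simp add: distrib_right pmap_add)

lemma pmap_uG_0: "pmap_uG \<alpha> n \<delta> 0 = 0"
  by (simp add: pmap_uG_def poly_eq_iff coeff_pmap)

lemma pmap_uG_uminus: "pmap_uG \<alpha> n \<delta> (- u) = - pmap_uG \<alpha> n \<delta> u"
  using pmap_uG_add[of \<alpha> n \<delta> "- u" u] by (simp add: pmap_uG_0 eq_neg_iff_add_eq_0)

lemma pmap_uG_sum: "pmap_uG \<alpha> n \<delta> (\<Sum>x\<in>X. f x) = (\<Sum>x\<in>X. pmap_uG \<alpha> n \<delta> (f x))"
  by (induction X rule: infinite_finite_induct) (simp_all add: pmap_uG_0 pmap_uG_add)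

lemma smult_sum_right: "smult c (\<Sum>x\<in>X. f x) = (\<Sum>x\<in>X. smult c (f x))"
  by (induction X rule: infinite_finite_induct) (simp_all add: smult_add_right)

lemma pmap_uG_monom:
  "pmap_uG \<alpha> n \<delta> (monom c k) = (\<Sum>\<nu>\<le>\<delta>. monom (smult c (vander_poly \<alpha> n \<nu>)) (k + \<nu>))"
proof (rule poly_eqI)
  fix m
  have "coeff (pmap_uG \<alpha> n \<delta> (monom c k)) m
      = (\<Sum>i<n. monom (\<Sum>\<nu>\<le>\<delta>. if k + \<nu> = m then c * \<alpha> ^ (i * \<nu>) else 0) i)"
    unfolding pmap_uG_def coeff_pmap
    by (intro sum.cong refl) (simp add: Grow_def sum_distrib_left mult_monom coeff_sum)
  also have "\<dots> = (\<Sum>\<nu>\<le>\<delta>. \<Sum>i<n. monom (if k + \<nu> = m then c * \<alpha> ^ (i * \<nu>) else 0) i)"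
    by (simp add: monom_sum sum.swap[of _ "{..<n}"])
  also have "\<dots> = coeff (\<Sum>\<nu>\<le>\<delta>. monom (smult c (vander_poly \<alpha> n \<nu>)) (k + \<nu>)) m"
    by (simp add: coeff_sum vander_poly_def)
      (intro sum.cong refl, auto simp: smult_sum_right smult_monom)
  finally show "coeff (pmap_uG \<alpha> n \<delta> (monom c k)) m =
      coeff (\<Sum>\<nu>\<le>\<delta>. monom (smult c (vander_poly \<alpha> n \<nu>)) (k + \<nu>)) m" .
qed

lemma pmap_uG_expand:
  "pmap_uG \<alpha> n \<delta> u =
    (\<Sum>k\<le>degree u. \<Sum>\<nu>\<le>\<delta>. monom (smult (coeff u k) (vander_poly \<alpha> n \<nu>)) (k + \<nu>))"
  by (subst (1) poly_as_sum_of_monoms[of u, symmetric]) (simp add: pmap_uG_sum pmap_uG_monom)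

lemma degree_pmap_uG_le: "degree (pmap_uG \<alpha> n \<delta> u) \<le> degree u + \<delta>"
  by (rule degree_le) (auto simp: pmap_uG_expand coeff_sum intro!: sum.neutral)

text \<open>\<open>skew_mult\<close> sums up to the degree of its right factor, which obstructs additivity in it;
  summing up to an arbitrary upper bound \<open>M\<close> instead gives the same product.\<close>
definition skew_mult_upto ::
  "nat \<Rightarrow> ('a::field poly \<Rightarrow> 'a poly) \<Rightarrow> 'a poly poly \<Rightarrow> nat \<Rightarrow> 'a poly poly \<Rightarrow> 'a poly poly" where
  "skew_mult_upto n s r M f =
     (\<Sum>i\<le>degree r. \<Sum>j\<le>M. monom (A_mult n ((s ^^ j) (coeff r i)) (coeff f j)) (i + j))"

lemma skew_mult_eq_upto:
  assumes "degree f \<le> M"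
  shows "skew_mult n s r f = skew_mult_upto n s r M f"
  unfolding skew_mult_def skew_mult_upto_def
  by (intro sum.cong refl sum.mono_neutral_left) (use assms in \<open>auto simp: coeff_eq_0 A_mult_def\<close>)

lemma skew_mult_upto_add:
  "skew_mult_upto n s r M (f + g) = skew_mult_upto n s r M f + skew_mult_upto n s r M g"
  unfolding skew_mult_upto_def A_mult_def
  by (simp add: distrib_left poly_mod_add_left add_monom[symmetric] sum.distrib)

lemma skew_mult_upto_sum:
  "skew_mult_upto n s r M (\<Sum>x\<in>X. f x) = (\<Sum>x\<in>X. skew_mult_upto n s r M (f x))"
proof (induction X rule: infinite_finite_induct)
  case (insert x F)
  then show ?case
    by (simp add: skew_mult_upto_add)
qed (simp_all add: skew_mult_upto_def A_mult_def)

lemma skew_mult_upto_monom: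
  assumes "t \<le> M"
  shows "skew_mult_upto n s r M (monom a t) =
    (\<Sum>i\<le>degree r. monom (A_mult n ((s ^^ t) (coeff r i)) a) (i + t))"
  unfolding skew_mult_upto_def
proof (intro sum.cong refl)
  fix i
  have "monom (A_mult n ((s ^^ j) (coeff r i)) (coeff (monom a t) j)) (i + j)
      = (if j = t then monom (A_mult n ((s ^^ t) (coeff r i)) a) (i + t) else 0)" for j
    by (auto simp: A_mult_def)
  then show "(\<Sum>j\<le>M. monom (A_mult n ((s ^^ j) (coeff r i)) (coeff (monom a t) j)) (i + j))
      = monom (A_mult n ((s ^^ t) (coeff r i)) a) (i + t)"
    using assms by simp
qed

lemma skew_mult_pmap_uG:
  assumes "\<alpha> ^ n = 1" "0 < n" "r \<in> skew_carr n"
  shows "skew_mult n (sigma \<alpha> n) r (pmap_uG \<alpha> n \<delta> u) =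
    pmap_uG \<alpha> n \<delta> (\<Sum>i\<le>degree r. \<Sum>k\<le>degree u. monom (coeff u k * poly (coeff r i) (\<alpha> ^ k)) (i + k))"
proof -
  let ?M = "degree u + \<delta>" and ?V = "vander_poly \<alpha> n"
  let ?c = "\<lambda>i k. coeff u k * poly (coeff r i) (\<alpha> ^ k)"
  have r: "degree (coeff r i) < n" for i
    using assms(3) by (simp add: skew_carr_def A_carr_def)
  have summand: "skew_mult_upto n (sigma \<alpha> n) r ?M (monom (smult (coeff u k) (?V \<nu>)) (k + \<nu>))
      = (\<Sum>i\<le>degree r. monom (smult (?c i k) (?V \<nu>)) (i + k + \<nu>))"
    if "k \<le> degree u" "\<nu> \<le> \<delta>" for k \<nu>
    using that
    by (simp add: skew_mult_upto_monom A_mult_smult_right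
      A_mult_funpow_sigma_vander_poly[OF assms(1,2) r] add.assoc)
  have "skew_mult n (sigma \<alpha> n) r (pmap_uG \<alpha> n \<delta> u)
      = skew_mult_upto n (sigma \<alpha> n) r ?M (pmap_uG \<alpha> n \<delta> u)"
    by (rule skew_mult_eq_upto) (rule degree_pmap_uG_le)
  also have "\<dots> = (\<Sum>k\<le>degree u. \<Sum>\<nu>\<le>\<delta>. \<Sum>i\<le>degree r. monom (smult (?c i k) (?V \<nu>)) (i + k + \<nu>))"
    by (simp add: pmap_uG_expand[of \<alpha> n \<delta> u] skew_mult_upto_sum summand)
  also have "\<dots> = (\<Sum>i\<le>degree r. \<Sum>k\<le>degree u. \<Sum>\<nu>\<le>\<delta>. monom (smult (?c i k) (?V \<nu>)) (i + k + \<nu>))"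
    by (subst sum.swap, rule sum.cong[OF refl], rule sum.swap)
  also have "\<dots> = pmap_uG \<alpha> n \<delta> (\<Sum>i\<le>degree r. \<Sum>k\<le>degree u. monom (?c i k) (i + k))"
    by (simp add: pmap_uG_sum pmap_uG_monom)
  finally show ?thesis .
qed

lemma sigma_cyclic_image_row_Grow:
  assumes "\<alpha> ^ n = 1" "0 < n"
  shows "sigma_cyclic n (sigma \<alpha> n) (image_row (Grow \<alpha> n \<delta>))"
proof -
  have image: "pmap n ` image_row (Grow \<alpha> n \<delta>) = range (pmap_uG \<alpha> n \<delta>)"
    by (auto simp: image_row_def pmap_uG_def)
  show ?thesis
    unfolding sigma_cyclic_def left_ideal_def image
  proof (intro conjI ballI)
    show "range (pmap_uG \<alpha> n \<delta>) \<subseteq> skew_carr n"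
      using degree_coeff_pmap[OF assms(2)] by (auto simp: skew_carr_def A_carr_def pmap_uG_def)
    show "0 \<in> range (pmap_uG \<alpha> n \<delta>)"
      by (metis pmap_uG_0 rangeI)
    fix f assume "f \<in> range (pmap_uG \<alpha> n \<delta>)"
    then obtain u where f: "f = pmap_uG \<alpha> n \<delta> u"
      by blast
    show "- f \<in> range (pmap_uG \<alpha> n \<delta>)"
      unfolding f by (metis pmap_uG_uminus rangeI)
    show "f + g \<in> range (pmap_uG \<alpha> n \<delta>)" if "g \<in> range (pmap_uG \<alpha> n \<delta>)" for g
      using that unfolding f by (auto simp flip: pmap_uG_add)
    show "skew_mult n (sigma \<alpha> n) r f \<in> range (pmap_uG \<alpha> n \<delta>)" if "r \<in> skew_carr n" for r
      unfolding f skew_mult_pmap_uG[OF assms that] by (rule rangeI)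
  qed
qed

subsection \<open>\<open>G\<close> generates an \<open>(n, 1, \<delta>)\<close> convolutional code\<close>

lemma coeff_Grow: "i < n \<Longrightarrow> coeff (Grow \<alpha> n \<delta> i) k = (if k \<le> \<delta> then \<alpha> ^ (i * k) else 0)"
  by (simp add: Grow_def coeff_sum)

lemma degree_Grow_le: "degree (Grow \<alpha> n \<delta> i) \<le> \<delta>"
proof (cases "i < n")
  case True
  then show ?thesis
    by (intro degree_le) (simp add: coeff_Grow)
qed (simp add: Grow_def)

lemma degree_Grow: "i < n \<Longrightarrow> \<alpha> \<noteq> 0 \<Longrightarrow> degree (Grow \<alpha> n \<delta> i) = \<delta>"
  by (intro antisym degree_Grow_le le_degree) (simp add: coeff_Grow)

lemma sum_powers_root_of_unity:
  fixes \<alpha> :: "'a::field"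
  assumes "\<alpha> ^ n = 1" "\<alpha> ^ k \<noteq> 1"
  shows "(\<Sum>i<n. \<alpha> ^ (i * k)) = 0"
proof -
  have "(\<Sum>i<n. \<alpha> ^ (i * k)) = (\<Sum>i<n. (\<alpha> ^ k) ^ i)"
    by (intro sum.cong refl) (metis power_mult mult.commute)
  also have "\<dots> = ((\<alpha> ^ k) ^ n - 1) / (\<alpha> ^ k - 1)"
    by (rule geometric_sum[OF assms(2)])
  also have "(\<alpha> ^ k) ^ n = 1"
    using assms(1) by (metis power_mult mult.commute power_one)
  finally show ?thesis
    by simp
qed

lemma right_invertible_row_Grow:
  fixes \<alpha> :: "'a::field"
  assumes "mult_ord \<alpha> = n" "0 < n" "\<delta> < n"
  shows "right_invertible_row n (Grow \<alpha> n \<delta>)"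
  unfolding right_invertible_row_def
proof (intro exI[of _ "\<lambda>i. [:inverse (of_nat n):]"] poly_eqI)
  fix k
  have "(\<Sum>i<n. \<alpha> ^ (i * k)) = 0" if "0 < k" "k \<le> \<delta>"
    using that assms
    by (intro sum_powers_root_of_unity power_mult_ord[OF assms(1,2)]
      power_ne_1_below_mult_ord[OF assms(1,2)]) auto
  moreover have "coeff (\<Sum>i<n. Grow \<alpha> n \<delta> i * [:inverse (of_nat n):]) k
      = inverse (of_nat n) * (if k \<le> \<delta> then (\<Sum>i<n. \<alpha> ^ (i * k)) else 0)"
    by (auto simp: coeff_sum coeff_Grow sum_distrib_left[symmetric] mult.commute)
  ultimately show "coeff (\<Sum>i<n. Grow \<alpha> n \<delta> i * [:inverse (of_nat n):]) k = coeff 1 k"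
    using of_nat_mult_ord_ne_0[OF assms(1,2)] by (auto simp: coeff_1)
qed

lemma conv_code_n1_image_row_Grow:
  fixes \<alpha> :: "'a::field"
  assumes "mult_ord \<alpha> = n" "0 < n" "\<delta> < n"
  shows "conv_code_n1 n \<delta> (image_row (Grow \<alpha> n \<delta>))"
  unfolding conv_code_n1_def
proof (intro exI[of _ "Grow \<alpha> n \<delta>"] conjI allI impI refl)
  show "n \<le> i \<Longrightarrow> Grow \<alpha> n \<delta> i = 0" for i
    by (simp add: Grow_def)
  show "right_invertible_row n (Grow \<alpha> n \<delta>)"
    using assms by (rule right_invertible_row_Grow)
  have "\<alpha> \<noteq> 0"
    using power_mult_ord[OF assms(1,2)] assms(2) by (rule nonzero_if_power_eq_1)
  then have "(\<lambda>i. degree (Grow \<alpha> n \<delta> i)) ` {..<n} = {\<delta>}"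
    using assms(2) degree_Grow by auto
  then show "Max ((\<lambda>i. degree (Grow \<alpha> n \<delta> i)) ` {..<n}) = \<delta>"
    by simp
qed

subsection \<open>The free distance\<close>

lemma card_roots_le:
  fixes x :: "'b \<Rightarrow> 'a::field"
  assumes "inj_on x I" "\<forall>i\<in>I. x i \<noteq> 0" "p \<noteq> 0" "\<And>\<nu>. \<nu> < a \<Longrightarrow> coeff p \<nu> = 0"
  shows "card {i\<in>I. poly p (x i) = 0} \<le> degree p - a"
proof -
  define q where "q = poly_shift a p"
  have p: "p = monom 1 a * q"
    by (rule poly_eqI) (auto simp: coeff_monom_mult q_def coeff_poly_shift assms(4))
  then have "q \<noteq> 0"
    using assms(3) by auto
  have "{i\<in>I. poly p (x i) = 0} = {i\<in>I. poly q (x i) = 0}"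
    using assms(2) by (subst p) (auto simp: poly_monom)
  also have "card \<dots> \<le> card {y. poly q y = 0}"
    by (rule card_inj_on_le[where f = x])
      (use assms(1) poly_roots_finite[OF \<open>q \<noteq> 0\<close>] in \<open>auto intro: inj_on_subset\<close>)
  also have "\<dots> \<le> degree q"
    by (rule card_poly_roots_bound[OF \<open>q \<noteq> 0\<close>])
  also have "\<dots> \<le> degree p - a"
    by (rule degree_le) (auto simp: q_def coeff_poly_shift coeff_eq_0)
  finally show ?thesis .
qed

lemma card_nonroots_ge:
  fixes x :: "'b \<Rightarrow> 'a::field"
  assumes "finite I" "inj_on x I" "\<forall>i\<in>I. x i \<noteq> 0" "p \<noteq> 0"
    and "\<And>\<nu>. \<nu> < a \<Longrightarrow> coeff p \<nu> = 0" "degree p \<le> b"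
  shows "card I - (b - a) \<le> card {i\<in>I. poly p (x i) \<noteq> 0}"
proof -
  have "card I = card {i\<in>I. poly p (x i) \<noteq> 0} + card {i\<in>I. poly p (x i) = 0}"
    using assms(1) by (subst card_Un_disjoint[symmetric]) (auto intro: arg_cong[where f = card])
  moreover have "card {i\<in>I. poly p (x i) = 0} \<le> degree p - a"
    using assms(2-5) by (rule card_roots_le)
  ultimately show ?thesis
    using assms(6) by linarith
qed

lemma wt_eq_sum_card_coeff_ne_0:
  assumes "\<And>i. i < n \<Longrightarrow> degree (v i) \<le> D"
  shows "wt n v = (\<Sum>j\<le>D. card {i\<in>{..<n}. coeff (v i) j \<noteq> 0})"
proof -
  have "card {j. coeff (v i) j \<noteq> 0} = (\<Sum>j\<le>D. if coeff (v i) j \<noteq> 0 then 1 else 0)"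
    if "i < n" for i
  proof -
    have "{j. coeff (v i) j \<noteq> 0} = {j\<in>{..D}. coeff (v i) j \<noteq> 0}"
      using assms[OF that] by (auto intro: ccontr simp: coeff_eq_0)
    then show ?thesis
      by (simp add: sum.inter_filter[symmetric])
  qed
  then have "wt n v = (\<Sum>i<n. \<Sum>j\<le>D. if coeff (v i) j \<noteq> 0 then 1 else 0)"
    by (simp add: wt_def)
  also have "\<dots> = (\<Sum>j\<le>D. \<Sum>i<n. if coeff (v i) j \<noteq> 0 then 1 else 0)"
    by (rule sum.swap)
  also have "\<dots> = (\<Sum>j\<le>D. card {i\<in>{..<n}. coeff (v i) j \<noteq> 0})"
    by (simp add: sum.inter_filter[symmetric])
  finally show ?thesis .
qed

definition window_poly :: "'a::field poly \<Rightarrow> nat \<Rightarrow> nat \<Rightarrow> 'a poly" where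
  "window_poly u \<delta> j = (\<Sum>\<nu>\<le>\<delta>. monom (if \<nu> \<le> j then coeff u (j - \<nu>) else 0) \<nu>)"

lemma coeff_window_poly:
  "coeff (window_poly u \<delta> j) \<nu> = (if \<nu> \<le> \<delta> \<and> \<nu> \<le> j then coeff u (j - \<nu>) else 0)"
  by (simp add: window_poly_def coeff_sum)

lemma coeff_mult_Grow:
  assumes "i < n"
  shows "coeff (u * Grow \<alpha> n \<delta> i) j = poly (window_poly u \<delta> j) (\<alpha> ^ i)"
proof -
  have "coeff (u * Grow \<alpha> n \<delta> i) j = (\<Sum>\<nu>\<le>\<delta>. coeff (monom (\<alpha> ^ (i * \<nu>)) \<nu> * u) j)"
    using assms by (simp add: Grow_def sum_distrib_left coeff_sum mult.commute)
  also have "\<dots> = poly (window_poly u \<delta> j) (\<alpha> ^ i)"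
    unfolding window_poly_def poly_sum
    by (intro sum.cong refl) (simp only: coeff_monom_mult, auto simp: poly_monom power_mult)
  finally show ?thesis .
qed

lemma card_coeff_mult_Grow_ne_0_ge:
  fixes \<alpha> :: "'a::field"
  assumes "\<alpha> \<noteq> 0" "inj_on (\<lambda>i. \<alpha> ^ i) {..<n}" "\<And>k. k < m \<Longrightarrow> coeff u k = 0"
    and "\<nu> \<le> \<delta>" "\<nu> \<le> j" "coeff u (j - \<nu>) \<noteq> 0"
  shows "n - (min \<delta> (j - m) - (j - degree u)) \<le> card {i\<in>{..<n}. coeff (u * Grow \<alpha> n \<delta> i) j \<noteq> 0}"
proof -
  let ?p = "window_poly u \<delta> j"
  have "?p \<noteq> 0"
    using assms(4-6) coeff_window_poly[of u \<delta> j \<nu>] by auto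
  moreover have "coeff ?p l = 0" if "l < j - degree u" for l
    using that by (auto simp: coeff_window_poly coeff_eq_0)
  moreover have "degree ?p \<le> min \<delta> (j - m)"
    by (rule degree_le) (auto simp: coeff_window_poly assms(3))
  ultimately have "card {..<n} - (min \<delta> (j - m) - (j - degree u)) \<le> card {i\<in>{..<n}. poly ?p (\<alpha> ^ i) \<noteq> 0}"
    using assms(1,2) by (intro card_nonroots_ge) auto
  also have "{i\<in>{..<n}. poly ?p (\<alpha> ^ i) \<noteq> 0} = {i\<in>{..<n}. coeff (u * Grow \<alpha> n \<delta> i) j \<noteq> 0}"
    by (auto simp: coeff_mult_Grow)
  finally show ?thesis
    by simp
qed

text \<open>\<open>B j\<close> stands for the weight of the coefficient of \<open>z\<^sup>j\<close>, and \<open>m\<close>, \<open>d\<close> for the lowest and the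
  highest exponent of \<open>u\<close>. If the rows \<open>m + t\<close> and \<open>d + t\<close> overlap (\<open>e = d - m \<le> \<delta>\<close>), the low row
  \<open>m + s\<close> is paired with the high row \<open>m + \<delta> + 1 + s\<close> for \<open>s < e\<close>, each pair weighing at least
  \<open>2 n + 1 - e\<close>, and the rows in between each weigh at least \<open>n - e\<close>.\<close>
lemma sum_row_weights_ge:
  fixes B :: "nat \<Rightarrow> nat"
  assumes "m \<le> d" "\<delta> < n"
    and low: "\<And>t. t \<le> \<delta> \<Longrightarrow> n - min t (d - m) \<le> B (m + t)"
    and high: "\<And>t. t \<le> \<delta> \<Longrightarrow> n - (\<delta> - t) \<le> B (d + t)"
  shows "n * (\<delta> + 1) \<le> (\<Sum>j\<le>d + \<delta>. B j)"
proof (cases "m + \<delta> < d")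
  case True
  let ?L = "(+) m ` {..\<delta>}" and ?H = "(+) d ` {..\<delta>}"
  have "n * (\<delta> + 1) = (\<Sum>t\<le>\<delta>. n)"
    by simp
  also have "\<dots> \<le> (\<Sum>t\<le>\<delta>. B (m + t) + B (d + t))"
  proof (rule sum_mono)
    fix t assume "t \<in> {..\<delta>}"
    with True low[of t] high[of t] assms(2) show "n \<le> B (m + t) + B (d + t)"
      by auto
  qed
  also have "\<dots> = (\<Sum>j\<in>?L \<union> ?H. B j)"
    using True by (subst sum.union_disjoint) (auto simp: sum.distrib sum.reindex)
  also have "\<dots> \<le> (\<Sum>j\<le>d + \<delta>. B j)"
    using True by (intro sum_mono2) auto
  finally show ?thesis .
next
  case False
  define e where "e = d - m"
  have e: "e \<le> \<delta>" "d = m + e"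
    using False assms(1) by (auto simp: e_def)
  have low_e: "n - min t e \<le> B (m + t)" if "t \<le> \<delta>" for t
    unfolding e_def using that by (rule low)
  let ?L = "(+) m ` {..<e}" and ?H = "(+) (m + \<delta> + 1) ` {..<e}" and ?M = "(+) m ` {e..\<delta>}"
  have "n * (\<delta> + 1) \<le> e * (2 * n + 1 - e) + (\<delta> + 1 - e) * (n - e)"
  proof -
    obtain a where a: "\<delta> = e + a"
      using e(1) le_iff_add by blast
    obtain b where b: "n = Suc (\<delta> + b)"
      using assms(2) less_iff_Suc_add by blast
    have ab: "\<delta> = e + a" "n = e + a + 1 + b"
      using a b by simp_all
    then have "2 * n + 1 - e = e + 2 * a + 2 * b + 3" "\<delta> + 1 - e = a + 1" "n - e = a + 1 + b"
      by simp_all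
    moreover have "e * (e + 2 * a + 2 * b + 3) + (a + 1) * (a + 1 + b)
        = (e + a + 1 + b) * (e + a + 1) + e * b + e"
      by (simp add: algebra_simps)
    ultimately show ?thesis
      unfolding ab by presburger
  qed
  also have "\<dots> = (\<Sum>s<e. 2 * n + 1 - e) + (\<Sum>t\<in>{e..\<delta>}. n - e)"
    by simp
  also have "\<dots> \<le> (\<Sum>s<e. B (m + s) + B (m + \<delta> + 1 + s)) + (\<Sum>t\<in>{e..\<delta>}. B (m + t))"
  proof (intro add_mono sum_mono)
    fix s assume "s \<in> {..<e}"
    then have s: "s < e" "\<delta> + 1 + s - e \<le> \<delta>"
      using e by auto
    have "n - s \<le> B (m + s)"
      using low_e[of s] s e by (simp add: min_def)
    moreover have "d + (\<delta> + 1 + s - e) = m + \<delta> + 1 + s" "\<delta> - (\<delta> + 1 + s - e) = e - 1 - s"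
      using s e by auto
    then have "n - (e - 1 - s) \<le> B (m + \<delta> + 1 + s)"
      using high[OF s(2)] by simp
    ultimately show "2 * n + 1 - e \<le> B (m + s) + B (m + \<delta> + 1 + s)"
      using s e assms(2) by linarith
  next
    fix t assume "t \<in> {e..\<delta>}"
    then show "n - e \<le> B (m + t)"
      using low_e[of t] by (simp add: min.absorb2)
  qed
  also have "\<dots> = (\<Sum>j\<in>?L. B j) + (\<Sum>j\<in>?H. B j) + (\<Sum>j\<in>?M. B j)"
    by (simp only: sum.distrib sum.reindex[OF inj_on_add] comp_def)
  also have "\<dots> = (\<Sum>j\<in>?L \<union> ?H \<union> ?M. B j)"
  proof -
    have "finite ?L" "finite ?H" "finite ?M"
      by simp_all
    moreover have "?L \<inter> ?H = {}" "(?L \<union> ?H) \<inter> ?M = {}"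
      using e by auto
    ultimately show ?thesis
      by (simp only: sum.union_disjoint finite_UnI)
  qed
  also have "\<dots> \<le> (\<Sum>j\<le>d + \<delta>. B j)"
    using e by (intro sum_mono2) auto
  finally show ?thesis .
qed

lemma wt_mult_Grow_ge:
  fixes \<alpha> :: "'a::field"
  assumes "mult_ord \<alpha> = n" "0 < n" "\<delta> < n" "u \<noteq> 0"
  shows "n * (\<delta> + 1) \<le> wt n (\<lambda>i. u * Grow \<alpha> n \<delta> i)"
proof -
  define d where "d = degree u"
  define m where "m = (LEAST k. coeff u k \<noteq> 0)"
  define B where "B j = card {i\<in>{..<n}. coeff (u * Grow \<alpha> n \<delta> i) j \<noteq> 0}" for j
  have "\<alpha> \<noteq> 0"
    using power_mult_ord[OF assms(1,2)] assms(2) by (rule nonzero_if_power_eq_1)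
  note row = card_coeff_mult_Grow_ne_0_ge[OF this inj_on_power_mult_ord[OF assms(1,2)]]
  have ud: "coeff u d \<noteq> 0"
    using assms(4) by (simp add: d_def)
  then have um: "coeff u m \<noteq> 0" and "m \<le> d"
    unfolding m_def by (rule LeastI, rule Least_le)
  have below_m: "coeff u k = 0" if "k < m" for k
    using that not_less_Least unfolding m_def by blast
  have "wt n (\<lambda>i. u * Grow \<alpha> n \<delta> i) = (\<Sum>j\<le>d + \<delta>. B j)"
    unfolding B_def d_def
    by (intro wt_eq_sum_card_coeff_ne_0 order_trans[OF degree_mult_le] add_left_mono degree_Grow_le)
  moreover have "n * (\<delta> + 1) \<le> (\<Sum>j\<le>d + \<delta>. B j)"
  proof (rule sum_row_weights_ge[OF \<open>m \<le> d\<close> assms(3)])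
    fix t assume "t \<le> \<delta>"
    show "n - min t (d - m) \<le> B (m + t)"
      using row[where m = m and j = "m + t", OF below_m \<open>t \<le> \<delta>\<close>] um by (auto simp: B_def d_def)
    show "n - (\<delta> - t) \<le> B (d + t)"
      using row[where m = m and j = "d + t", OF below_m \<open>t \<le> \<delta>\<close>] ud by (auto simp: B_def d_def)
  qed
  ultimately show ?thesis
    by simp
qed

lemma is_MDS_image_row_Grow:
  fixes \<alpha> :: "'a::field"
  assumes "mult_ord \<alpha> = n" "0 < n" "\<delta> < n"
  shows "is_MDS n \<delta> (image_row (Grow \<alpha> n \<delta>))"
  unfolding is_MDS_def free_distance_def
proof (rule Least_equality)
  have "\<alpha> \<noteq> 0"
    using power_mult_ord[OF assms(1,2)] assms(2) by (rule nonzero_if_power_eq_1)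
  then have "{j. coeff (Grow \<alpha> n \<delta> i) j \<noteq> 0} = {..\<delta>}" if "i < n" for i
    using that by (auto simp: coeff_Grow)
  then have "wt n (Grow \<alpha> n \<delta>) = n * (\<delta> + 1)"
    by (simp add: wt_def)
  moreover have "Grow \<alpha> n \<delta> \<in> image_row (Grow \<alpha> n \<delta>)"
    unfolding image_row_def by (auto intro: exI[of _ 1])
  moreover have "Grow \<alpha> n \<delta> \<noteq> (\<lambda>_. 0)"
    using assms(2) \<open>\<alpha> \<noteq> 0\<close> degree_Grow[of 0 n \<alpha> \<delta>] coeff_Grow[of 0 n \<alpha> \<delta> 0]
    by (metis one_neq_zero coeff_0 power_0 le0 mult_0)
  ultimately show "\<exists>v\<in>image_row (Grow \<alpha> n \<delta>). v \<noteq> (\<lambda>_. 0) \<and> n * (\<delta> + 1) = wt n v"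
    by metis
next
  fix w assume "\<exists>v\<in>image_row (Grow \<alpha> n \<delta>). v \<noteq> (\<lambda>_. 0) \<and> w = wt n v"
  then obtain u where "(\<lambda>i. u * Grow \<alpha> n \<delta> i) \<noteq> (\<lambda>_. 0)" "w = wt n (\<lambda>i. u * Grow \<alpha> n \<delta> i)"
    unfolding image_row_def by blast
  then show "n * (\<delta> + 1) \<le> w"
    using wt_mult_Grow_ge[OF assms] by fastforce
qed

theorem proposition4p2:
  fixes \<alpha> :: "'a::{finite, field}" and n \<delta> :: nat
  assumes "0 < n"
    and "coprime n (card (UNIV :: 'a set))"
    and "mult_ord \<alpha> = n"
  shows "A_alg_automorphism n (sigma \<alpha> n)
         \<and> sigma \<alpha> n (A_x n) = smult \<alpha> (A_x n)
         \<and> sigma_cyclic n (sigma \<alpha> n) (image_row (Grow \<alpha> n \<delta>))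
         \<and> (\<delta> < n \<longrightarrow> conv_code_n1 n \<delta> (image_row (Grow \<alpha> n \<delta>))
                     \<and> is_MDS n \<delta> (image_row (Grow \<alpha> n \<delta>)))"
proof -
  have "\<alpha> ^ n = 1"
    using assms(3,1) by (rule power_mult_ord)
  then show ?thesis
    using assms(1,3) A_alg_automorphism_sigma sigma_A_x sigma_cyclic_image_row_Grow
      conv_code_n1_image_row_Grow is_MDS_image_row_Grow
    by blast
qed

end
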